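(* Let $\Gamma$ be a gain operator on $\ell^\infty_+(\mathcal I)$ satisfying the $\oplus$-MBI property, and for $b\in\ell^\infty_+(\mathcal I)$ let $\Gamma^\oplus_b(s):=b\oplus\Gamma(s)$. Then for each $b\in\ell^\infty_+(\mathcal I)$ there exist fixed points $s_*(b)$ and $s^*(b)$ of $\Gamma^\oplus_b$ such that: (a) every $s\in\mathrm{Fix}(\Gamma^\oplus_b)$ satisfies $s_*(b)\le s\le s^*(b)$; (b) if $b^1\le b^2$ then $s_*(b^1)\le s_*(b^2)$ and $s^*(b^1)\le s^*(b^2)$; (c) for every $s\le s_*(b)$, $(\Gamma^\oplus_b)^n(s)\to s_*(b)$ weak$^*$; (d) for every $s\ge s^*(b)$, $(\Gamma^\oplus_b)^n(s)\to s^*(b)$ weak$^*$.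
   Context: Let $\mathcal I$ be a nonempty countable index set; $\ell^\infty_+(\mathcal I)$ is the cone of nonnegative real families $s=(s_i)_{i\in\mathcal I}$ with $\|s\|:=\sup_i|s_i|<\infty$, ordered componentwise; $\oplus$ is the componentwise maximum. A sequence in $\ell^\infty(\mathcal I)$ converges weak$^*$ (viewing $\ell^\infty=(\ell^1)^*$) iff it is norm-bounded and converges componentwise. $\mathcal K_\infty$: continuous strictly increasing unbounded $\gamma:\mathbb R_+\to\mathbb R_+$ with $\gamma(0)=0$. For $\mathcal J\subset\mathcal I$, $s_{|\mathcal J}$ agrees with $s$ on $\mathcal J$ and is $0$ elsewhere. Gain operator: for each $i$ a finite (possibly empty) $\mathcal I_i\subset\mathcal I\setminus\{i\}$; directed graph $\mathcal G$ with vertices $\mathcal I$ and edges $ji$, $j\in\mathcal I_i$; a pointwise equicontinuous family $\gamma_{ij}\in\mathcal K_\infty$ ($ji\in E(\mathcal G)$); functions $\mu_i:\ell^\infty_+(\mathcal I)\to[0,\infty]$ with (M1) some $\xi\in\mathcal K_\infty$ has $\mu_i(0)=0$, $\mu_i(s)\ge\xi(\|s\|)$; (M2) $\mu_i$ monotone; (M3) for each finite $\mathcal J$, $\mu_i$ restricted to vectors vanishing off $\mathcal J$ is finite-valued and continuous; (M4) for each norm-bounded $A$ and $\varepsilon>0$ there is $\delta>0$ with $\sup_i|\mu_i(s_{|\mathcal I_i})-\mu_i(s^0_{|\mathcal I_i})|\le\varepsilon$ whenever $s^0\in A$, $\|s-s^0\|\le\delta$. $\Gamma_i(s):=\mu_i([\gamma_{ij}(s_j)]_{j\in\mathcal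 I_i})$ (argument zero outside $\mathcal I_i$). $\oplus$-MBI property: there is $\varphi\in\mathcal K_\infty$ such that for all $s,b\in\ell^\infty_+(\mathcal I)$, $s\le b\oplus\Gamma(s)$ implies $\|s\|\le\varphi(\|b\|)$. $\mathrm{Fix}(T)$ denotes the fixed point set of $T$. *)

theory Defs
  imports "HOL-Analysis.Analysis"
begin


definition linf_pos :: "('i \<Rightarrow> real) set" where
  "linf_pos = {s. (\<forall>i. 0 \<le> s i) \<and> bdd_above (range (\<lambda>i. \<bar>s i\<bar>))}"

definition linf_norm :: "('i \<Rightarrow> real) \<Rightarrow> real" where
  "linf_norm s = (SUP i. \<bar>s i\<bar>)"

definition oplus :: "('i \<Rightarrow> real) \<Rightarrow> ('i \<Rightarrow> real) \<Rightarrow> ('i \<Rightarrow> real)" where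
  "oplus s t = (\<lambda>i. max (s i) (t i))"

definition restr :: "('i \<Rightarrow> real) \<Rightarrow> 'i set \<Rightarrow> ('i \<Rightarrow> real)" where
  "restr s J = (\<lambda>j. if j \<in> J then s j else 0)"

definition Kinf :: "(real \<Rightarrow> real) \<Rightarrow> bool" where
  "Kinf g \<longleftrightarrow> continuous_on {0..} g \<and> strict_mono_on {0..} g \<and> g 0 = 0
     \<and> (\<forall>r\<ge>0. g r \<ge> 0) \<and> (\<forall>M. \<exists>r\<ge>0. g r > M)"

definition weak_star_conv :: "(nat \<Rightarrow> 'i \<Rightarrow> real) \<Rightarrow> ('i \<Rightarrow> real) \<Rightarrow> bool" where
  "weak_star_conv f L \<longleftrightarrow> (\<exists>C. \<forall>n i. \<bar>f n i\<bar> \<le> C) \<and> (\<forall>i. (\<lambda>n. f n i) \<longlonglongrightarrow> L i)"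

definition gain_operator ::
  "('i \<Rightarrow> 'i set) \<Rightarrow> ('i \<Rightarrow> 'i \<Rightarrow> real \<Rightarrow> real) \<Rightarrow> ('i \<Rightarrow> ('i \<Rightarrow> real) \<Rightarrow> ereal) \<Rightarrow> bool" where
  "gain_operator Ii gam mu \<longleftrightarrow>
     (\<forall>i. finite (Ii i) \<and> i \<notin> Ii i)
   \<and> (\<forall>i. \<forall>j\<in>Ii i. Kinf (gam i j))
   \<comment> \<open>pointwise equicontinuity of the family\<close>
   \<and> (\<forall>r\<ge>0. \<forall>\<epsilon>>0. \<exists>\<delta>>0. \<forall>i. \<forall>j\<in>Ii i. \<forall>r'\<ge>0.
          \<bar>r' - r\<bar> < \<delta> \<longrightarrow> \<bar>gam i j r' - gam i j r\<bar> < \<epsilon>)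
   \<comment> \<open>values in [0,\<infinity>]\<close>
   \<and> (\<forall>i. \<forall>s\<in>linf_pos. 0 \<le> mu i s)
   \<comment> \<open>(M1)\<close>
   \<and> (\<exists>\<xi>. Kinf \<xi> \<and> (\<forall>i. mu i (\<lambda>_. 0) = 0 \<and> (\<forall>s\<in>linf_pos. ereal (\<xi> (linf_norm s)) \<le> mu i s)))
   \<comment> \<open>(M2)\<close>
   \<and> (\<forall>i. \<forall>s\<in>linf_pos. \<forall>t\<in>linf_pos. s \<le> t \<longrightarrow> mu i s \<le> mu i t)
   \<comment> \<open>(M3)\<close>
   \<and> (\<forall>i J. finite J \<longrightarrow>
        (\<forall>s\<in>linf_pos. (\<forall>j. j \<notin> J \<longrightarrow> s j = 0) \<longrightarrow>
           \<bar>mu i s\<bar> \<noteq> \<infinity> \<and>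
           (\<forall>\<epsilon>>0. \<exists>\<delta>>0. \<forall>t\<in>linf_pos. (\<forall>j. j \<notin> J \<longrightarrow> t j = 0) \<longrightarrow>
               linf_norm (\<lambda>j. t j - s j) < \<delta> \<longrightarrow>
               \<bar>real_of_ereal (mu i t) - real_of_ereal (mu i s)\<bar> < \<epsilon>)))
   \<comment> \<open>(M4)\<close>
   \<and> (\<forall>A \<subseteq> linf_pos. (\<exists>R. \<forall>s\<in>A. linf_norm s \<le> R) \<longrightarrow>
        (\<forall>\<epsilon>>0. \<exists>\<delta>>0. \<forall>s0\<in>A. \<forall>s\<in>linf_pos. linf_norm (\<lambda>j. s j - s0 j) \<le> \<delta> \<longrightarrow>
           (\<forall>i. \<bar>mu i (restr s (Ii i)) - mu i (restr s0 (Ii i))\<bar> \<le> ereal \<epsilon>)))"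

definition Gam ::
  "('i \<Rightarrow> 'i set) \<Rightarrow> ('i \<Rightarrow> 'i \<Rightarrow> real \<Rightarrow> real) \<Rightarrow> ('i \<Rightarrow> ('i \<Rightarrow> real) \<Rightarrow> ereal)
     \<Rightarrow> ('i \<Rightarrow> real) \<Rightarrow> ('i \<Rightarrow> real)" where
  "Gam Ii gam mu s = (\<lambda>i. real_of_ereal (mu i (\<lambda>j. if j \<in> Ii i then gam i j (s j) else 0)))"

definition MBI_oplus ::
  "('i \<Rightarrow> 'i set) \<Rightarrow> ('i \<Rightarrow> 'i \<Rightarrow> real \<Rightarrow> real) \<Rightarrow> ('i \<Rightarrow> ('i \<Rightarrow> real) \<Rightarrow> ereal) \<Rightarrow> bool" where
  "MBI_oplus Ii gam mu \<longleftrightarrow> (\<exists>\<phi>. Kinf \<phi> \<and>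
     (\<forall>s\<in>linf_pos. \<forall>b\<in>linf_pos. s \<le> oplus b (Gam Ii gam mu s) \<longrightarrow>
        linf_norm s \<le> \<phi> (linf_norm b)))"

definition Gam_b ::
  "('i \<Rightarrow> 'i set) \<Rightarrow> ('i \<Rightarrow> 'i \<Rightarrow> real \<Rightarrow> real) \<Rightarrow> ('i \<Rightarrow> ('i \<Rightarrow> real) \<Rightarrow> ereal)
     \<Rightarrow> ('i \<Rightarrow> real) \<Rightarrow> ('i \<Rightarrow> real) \<Rightarrow> ('i \<Rightarrow> real)" where
  "Gam_b Ii gam mu b s = oplus b (Gam Ii gam mu s)"

definition Fix_pos :: "(('i \<Rightarrow> real) \<Rightarrow> ('i \<Rightarrow> real)) \<Rightarrow> ('i \<Rightarrow> real) set" where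
  "Fix_pos T = {s \<in> linf_pos. T s = s}"

end

theory Submission
  imports Defs "HOL-Library.Function_Algebras"
begin

text \<open>For fixed \<open>b\<close>, the operator \<open>\<Gamma>\<^sup>\<oplus>\<^sub>b\<close> is monotone on nonnegative families and, since each
  \<open>\<Gamma>\<^sub>i\<close> depends continuously on the finitely many coordinates in \<open>\<I>\<^sub>i\<close>, componentwise
  sequentially continuous. The \<open>\<oplus>\<close>-MBI property says that the bounded subsolutions
  \<open>s \<le> \<Gamma>\<^sup>\<oplus>\<^sub>b(s)\<close> are uniformly bounded; capping \<open>\<Gamma>\<^sup>\<oplus>\<^sub>b(s)\<close> above that bound shows that
  \<open>\<Gamma>\<^sup>\<oplus>\<^sub>b\<close> maps bounded subsolutions to bounded subsolutions. Hence the iterates from \<open>0\<close>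
  increase to the least fixed point \<open>s\<^sub>*(b)\<close>, and the supremum of all bounded subsolutions is
  the greatest fixed point \<open>s\<^sup>*(b)\<close>, as in Knaster-Tarski. Iterates from below \<open>s\<^sub>*(b)\<close> are
  squeezed between \<open>s\<^sub>*(b)\<close> and the iterates from \<open>0\<close>. Iterates from above \<open>s\<^sup>*(b)\<close> stay
  above it, and their limit superior is again a bounded subsolution, hence at most \<open>s\<^sup>*(b)\<close>.
  Monotonicity in \<open>b\<close> holds because \<open>\<Gamma>\<^sup>\<oplus>\<^sub>b\<close> is monotone in \<open>b\<close>.\<close>

lemma linf_pos_nonneg: "s \<in> linf_pos \<Longrightarrow> 0 \<le> s"
  unfolding linf_pos_def by (simp add: le_fun_def)

lemma linf_posI: "0 \<le> s \<Longrightarrow> (\<And>i. s i \<le> K) \<Longrightarrow> s \<in> linf_pos"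
  unfolding linf_pos_def bdd_above_def by (auto simp: le_fun_def intro!: exI[of _ K])

lemma linf_pos_bounded: "s \<in> linf_pos \<Longrightarrow> \<exists>K. \<forall>i. s i \<le> K"
  unfolding linf_pos_def bdd_above_def by fastforce

lemma linf_norm_le: "(\<And>j. \<bar>f j\<bar> \<le> c) \<Longrightarrow> linf_norm f \<le> c"
  unfolding linf_norm_def by (rule cSUP_least) auto

lemma le_linf_norm:
  assumes "s \<in> linf_pos"
  shows "s i \<le> linf_norm s"
proof -
  have "\<bar>s i\<bar> \<le> (SUP j. \<bar>s j\<bar>)"
    using assms unfolding linf_pos_def by (intro cSUP_upper) auto
  then show ?thesis
    unfolding linf_norm_def by linarith
qed

lemma linf_pos_limit:
  assumes "\<And>n. 0 \<le> u n" "\<And>n i. u n i \<le> C" "\<And>i. (\<lambda>n. u n i) \<longlonglongrightarrow> \<tau> i"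
  shows "\<tau> \<in> linf_pos"
proof (rule linf_posI)
  show "0 \<le> \<tau>"
    using assms(1) by (auto simp: le_fun_def intro: LIMSEQ_le_const[OF assms(3)])
  show "\<tau> i \<le> C" for i
    by (rule LIMSEQ_le_const2[OF assms(3)]) (use assms(2) in blast)
qed

lemma weak_star_convI:
  assumes "\<And>n. 0 \<le> f n" "\<And>n i. f n i \<le> C" "\<And>i. (\<lambda>n. f n i) \<longlonglongrightarrow> L i"
  shows "weak_star_conv f L"
proof -
  have "\<bar>f n i\<bar> \<le> C" for n i
    using assms(1)[of n] assms(2)[of n i] by (simp add: le_fun_def)
  then show ?thesis
    unfolding weak_star_conv_def using assms(3) by blast
qed

lemma funpow_fixpoint: "f x = x \<Longrightarrow> (f ^^ n) x = x"
  by (induction n) auto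

lemma tail_sup_ge:
  fixes f :: "nat \<Rightarrow> real"
  assumes "bdd_above (range f)" "n \<le> k"
  shows "f k \<le> (SUP k\<in>{n..}. f k)"
  by (rule cSUP_upper) (use assms in \<open>auto intro: bdd_above_mono\<close>)

lemma tail_sup_tendsto:
  fixes f :: "nat \<Rightarrow> real"
  assumes "bdd_above (range f)" "bdd_below (range f)"
  shows "(\<lambda>n. SUP k\<in>{n..}. f k) \<longlonglongrightarrow> (INF n. SUP k\<in>{n..}. f k)"
proof (rule LIMSEQ_decseq_INF)
  obtain a where a: "\<And>k. a \<le> f k"
    using assms(2) by (auto simp: bdd_below_def)
  have "a \<le> (SUP k\<in>{n..}. f k)" for n
    using a[of n] tail_sup_ge[OF assms(1), of n n] by linarith
  then show "bdd_below (range (\<lambda>n. SUP k\<in>{n..}. f k))"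
    by (auto simp: bdd_below_def)
  show "decseq (\<lambda>n. SUP k\<in>{n..}. f k)"
    unfolding decseq_def
    by (intro allI impI cSUP_subset_mono) (use assms(1) in \<open>auto intro: bdd_above_mono\<close>)
qed

section \<open>Monotone operators with bounded subsolutions\<close>

definition subsolutions :: "(('i \<Rightarrow> real) \<Rightarrow> 'i \<Rightarrow> real) \<Rightarrow> ('i \<Rightarrow> real) set" where
  "subsolutions T = {s \<in> linf_pos. s \<le> T s}"

definition least_fix :: "(('i \<Rightarrow> real) \<Rightarrow> 'i \<Rightarrow> real) \<Rightarrow> 'i \<Rightarrow> real" where
  "least_fix T = (\<lambda>i. SUP n. (T ^^ n) 0 i)"

definition greatest_fix :: "(('i \<Rightarrow> real) \<Rightarrow> 'i \<Rightarrow> real) \<Rightarrow> 'i \<Rightarrow> real" where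
  "greatest_fix T = (\<lambda>i. SUP s\<in>subsolutions T. s i)"

lemma Fix_pos_subsolutions: "Fix_pos T \<subseteq> subsolutions T"
  unfolding Fix_pos_def subsolutions_def by auto

locale monotone_operator =
  fixes T :: "('i \<Rightarrow> real) \<Rightarrow> 'i \<Rightarrow> real"
  assumes nonneg: "0 \<le> s \<Longrightarrow> 0 \<le> T s"
    and mono: "0 \<le> s \<Longrightarrow> s \<le> t \<Longrightarrow> T s \<le> T t"
begin

lemma funpow_nonneg: "0 \<le> s \<Longrightarrow> 0 \<le> (T ^^ n) s"
  by (induction n) (auto intro: nonneg)

lemma funpow_mono_arg: "0 \<le> s \<Longrightarrow> s \<le> t \<Longrightarrow> (T ^^ n) s \<le> (T ^^ n) t"
  by (induction n) (auto intro: mono funpow_nonneg)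

lemma funpow_mono_operator:
  assumes "monotone_operator S" "\<And>s. 0 \<le> s \<Longrightarrow> S s \<le> T s" "0 \<le> s"
  shows "(S ^^ n) s \<le> (T ^^ n) s"
proof (induction n)
  case (Suc n)
  have "0 \<le> (S ^^ n) s"
    using monotone_operator.funpow_nonneg[OF assms(1,3)] .
  then have "S ((S ^^ n) s) \<le> T ((S ^^ n) s)" by (rule assms(2))
  also have "\<dots> \<le> T ((T ^^ n) s)" by (rule mono[OF \<open>0 \<le> (S ^^ n) s\<close> Suc])
  finally show ?case by simp
qed simp

lemma subsolution_funpow_le_Suc: "0 \<le> s \<Longrightarrow> s \<le> T s \<Longrightarrow> (T ^^ n) s \<le> (T ^^ Suc n) s"
  using funpow_mono_arg[of s "T s" n] by (simp only: funpow_Suc_right comp_apply)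

lemma zero_in_subsolutions: "0 \<in> subsolutions T"
  unfolding subsolutions_def by (auto intro: linf_posI nonneg)

end

locale subsolution_bounded_operator = monotone_operator +
  assumes subsolutions_bounded: "\<exists>K. \<forall>s\<in>subsolutions T. \<forall>i. s i \<le> K"
    and componentwise_continuous:
      "(\<And>n. 0 \<le> x n) \<Longrightarrow> 0 \<le> y \<Longrightarrow> (\<And>j. (\<lambda>n. x n j) \<longlonglongrightarrow> y j)
        \<Longrightarrow> (\<lambda>n. T (x n) i) \<longlonglongrightarrow> T y i"
begin

lemma T_in_subsolutions:
  assumes s: "s \<in> subsolutions T"
  shows "T s \<in> subsolutions T"
proof -
  obtain K where K: "\<And>u i. u \<in> subsolutions T \<Longrightarrow> u i \<le> K"
    using subsolutions_bounded by blast
  have s_nonneg: "0 \<le> s" and s_le: "s \<le> T s"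
    using s by (auto simp: subsolutions_def intro: linf_pos_nonneg)
  \<comment> \<open>Capping \<open>T s\<close> above the bound \<open>K\<close> gives a bounded subsolution, so the cap is never active.\<close>
  define w where "w = (\<lambda>i. min (T s i) (K + 1))"
  have "s i \<le> w i" for i
    using s_le K[OF s, of i] by (simp add: w_def le_fun_def)
  then have "s \<le> w"
    by (simp add: le_fun_def)
  have "w \<le> T s"
    by (simp add: w_def le_fun_def)
  also have "\<dots> \<le> T w"
    by (rule mono[OF s_nonneg \<open>s \<le> w\<close>])
  finally have "w \<in> subsolutions T"
    using s_nonneg \<open>s \<le> w\<close> unfolding subsolutions_def
    by (auto intro!: linf_posI[where K = "K + 1"] simp: w_def)
  then have T_s_le: "T s i \<le> K" for i
    using K[of w i] by (simp add: w_def)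
  show ?thesis
    unfolding subsolutions_def
    using T_s_le nonneg[OF s_nonneg] mono[OF s_nonneg s_le] by (auto intro: linf_posI)
qed

lemma funpow_in_subsolutions: "s \<in> subsolutions T \<Longrightarrow> (T ^^ n) s \<in> subsolutions T"
  by (induction n) (auto intro: T_in_subsolutions)

lemma funpow_zero_bdd_above: "bdd_above (range (\<lambda>n. (T ^^ n) 0 i))"
proof -
  obtain K where "\<And>u i. u \<in> subsolutions T \<Longrightarrow> u i \<le> K"
    using subsolutions_bounded by blast
  then show ?thesis
    using funpow_in_subsolutions[OF zero_in_subsolutions] by (auto simp: bdd_above_def)
qed

lemma funpow_zero_le_least_fix: "(T ^^ n) 0 \<le> least_fix T"
  unfolding least_fix_def le_fun_def by (auto intro: cSUP_upper funpow_zero_bdd_above)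

lemma funpow_zero_tendsto_least_fix: "(\<lambda>n. (T ^^ n) 0 i) \<longlonglongrightarrow> least_fix T i"
proof -
  have "incseq (\<lambda>n. (T ^^ n) 0 i)"
    using subsolution_funpow_le_Suc[of 0] nonneg[of 0] by (intro incseq_SucI) (simp add: le_fun_def)
  then show ?thesis
    unfolding least_fix_def by (rule LIMSEQ_incseq_SUP[OF funpow_zero_bdd_above])
qed

lemma least_fix_in_linf_pos: "least_fix T \<in> linf_pos"
proof -
  obtain K where K: "\<And>u i. u \<in> subsolutions T \<Longrightarrow> u i \<le> K"
    using subsolutions_bounded by blast
  have "least_fix T i \<le> K" for i
    unfolding least_fix_def
    by (rule cSUP_least) (auto intro: K funpow_in_subsolutions zero_in_subsolutions)
  moreover have "0 \<le> least_fix T"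
    using funpow_zero_le_least_fix[of 0] by simp
  ultimately show ?thesis
    by (rule linf_posI[rotated])
qed

lemma least_fix_fixed: "T (least_fix T) = least_fix T"
proof
  fix i
  have "(\<lambda>n. T ((T ^^ n) 0) i) \<longlonglongrightarrow> T (least_fix T) i"
    by (rule componentwise_continuous)
      (auto intro: funpow_nonneg linf_pos_nonneg least_fix_in_linf_pos funpow_zero_tendsto_least_fix)
  moreover have "(\<lambda>n. T ((T ^^ n) 0) i) \<longlonglongrightarrow> least_fix T i"
    using LIMSEQ_Suc[OF funpow_zero_tendsto_least_fix] by simp
  ultimately show "T (least_fix T) i = least_fix T i"
    by (rule LIMSEQ_unique)
qed

lemma least_fix_le_supersolution:
  assumes "0 \<le> s" "T s \<le> s"
  shows "least_fix T \<le> s"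
proof -
  have "(T ^^ n) 0 \<le> s" for n
  proof (induction n)
    case (Suc n)
    have "(T ^^ Suc n) 0 = T ((T ^^ n) 0)"
      by simp
    also have "\<dots> \<le> T s"
      by (rule mono[OF funpow_nonneg[OF order_refl] Suc])
    also have "\<dots> \<le> s"
      by (rule assms(2))
    finally show ?case .
  qed (simp only: funpow_0 assms(1))
  then show ?thesis
    unfolding least_fix_def le_fun_def by (auto intro: cSUP_least)
qed

lemma funpow_tendsto_least_fix:
  assumes "0 \<le> s" "s \<le> least_fix T"
  shows "weak_star_conv (\<lambda>n. (T ^^ n) s) (least_fix T)"
proof -
  have lower: "(T ^^ n) 0 \<le> (T ^^ n) s" for n
    by (rule funpow_mono_arg) (simp_all add: assms(1))
  have upper: "(T ^^ n) s \<le> least_fix T" for n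
    using funpow_mono_arg[OF assms, of n] funpow_fixpoint[of T, OF least_fix_fixed] by simp
  obtain K where "\<And>i. least_fix T i \<le> K"
    using linf_pos_bounded[OF least_fix_in_linf_pos] by blast
  then show ?thesis
    using upper lower
    by (intro weak_star_convI[where C = K] funpow_nonneg assms(1)
        tendsto_sandwich[OF _ _ funpow_zero_tendsto_least_fix tendsto_const])
      (auto simp: le_fun_def intro: order_trans)
qed

lemma subsolution_le_greatest_fix:
  assumes "s \<in> subsolutions T"
  shows "s \<le> greatest_fix T"
proof -
  obtain K where "\<And>u i. u \<in> subsolutions T \<Longrightarrow> u i \<le> K"
    using subsolutions_bounded by blast
  then have "bdd_above ((\<lambda>u. u i) ` subsolutions T)" for i
    by (auto simp: bdd_above_def)
  then show ?thesis
    unfolding greatest_fix_def le_fun_def using assms by (auto intro: cSUP_upper)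
qed

lemma greatest_fix_in_subsolutions: "greatest_fix T \<in> subsolutions T"
proof -
  obtain K where K: "\<And>u i. u \<in> subsolutions T \<Longrightarrow> u i \<le> K"
    using subsolutions_bounded by blast
  have nonempty: "subsolutions T \<noteq> {}"
    using zero_in_subsolutions by blast
  have nonneg_gfix: "0 \<le> greatest_fix T"
    by (rule subsolution_le_greatest_fix[OF zero_in_subsolutions])
  have "greatest_fix T i \<le> K" for i
    unfolding greatest_fix_def by (rule cSUP_least[OF nonempty K])
  then have "greatest_fix T \<in> linf_pos"
    by (rule linf_posI[OF nonneg_gfix])
  moreover have "s i \<le> T (greatest_fix T) i" if "s \<in> subsolutions T" for s i
  proof -
    have s: "s \<in> linf_pos" "s \<le> T s"
      using that by (auto simp: subsolutions_def)
    have "T s \<le> T (greatest_fix T)"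
      by (rule mono[OF linf_pos_nonneg[OF s(1)] subsolution_le_greatest_fix[OF that]])
    then show ?thesis
      using s(2) by (auto simp: le_fun_def intro: order_trans)
  qed
  then have "greatest_fix T \<le> T (greatest_fix T)"
    unfolding greatest_fix_def le_fun_def by (auto intro: cSUP_least[OF nonempty])
  ultimately show ?thesis
    by (simp add: subsolutions_def)
qed

lemma greatest_fix_fixed: "T (greatest_fix T) = greatest_fix T"
proof (rule order.antisym)
  show "T (greatest_fix T) \<le> greatest_fix T"
    by (intro subsolution_le_greatest_fix T_in_subsolutions greatest_fix_in_subsolutions)
  show "greatest_fix T \<le> T (greatest_fix T)"
    using greatest_fix_in_subsolutions by (simp add: subsolutions_def)
qed

lemma fixpoint_le_greatest_fix: "s \<in> Fix_pos T \<Longrightarrow> s \<le> greatest_fix T"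
  using Fix_pos_subsolutions subsolution_le_greatest_fix by blast

lemma tail_sup_funpow_le:
  assumes "0 \<le> s" "\<And>n i. (T ^^ n) s i \<le> C"
  shows "(\<lambda>i. SUP k\<in>{Suc n..}. (T ^^ k) s i) \<le> T (\<lambda>i. SUP k\<in>{n..}. (T ^^ k) s i)"
proof (rule le_funI, rule cSUP_least)
  fix i k
  assume "k \<in> {Suc n..}"
  then obtain m where m: "k = Suc m" "n \<le> m"
    by (cases k) auto
  have "bdd_above (range (\<lambda>k. (T ^^ k) s j))" for j
    using assms(2) by (auto simp: bdd_above_def)
  then have "(T ^^ m) s j \<le> (SUP k\<in>{n..}. (T ^^ k) s j)" for j
    using m(2) by (rule tail_sup_ge)
  then have "(T ^^ m) s \<le> (\<lambda>i. SUP k\<in>{n..}. (T ^^ k) s i)"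
    by (simp add: le_fun_def)
  then have "T ((T ^^ m) s) \<le> T (\<lambda>i. SUP k\<in>{n..}. (T ^^ k) s i)"
    by (rule mono[OF funpow_nonneg[OF assms(1)]])
  then show "(T ^^ k) s i \<le> T (\<lambda>i. SUP k\<in>{n..}. (T ^^ k) s i) i"
    by (simp add: m(1) le_fun_def)
qed simp

text \<open>The witnesses are the tail suprema \<open>u n = sup\<^sub>k\<^sub>\<ge>\<^sub>n T\<^sup>k s\<close> and their pointwise limit \<open>\<tau>\<close>,
  the limit superior of the iterates.\<close>

lemma limsup_funpow_subsolution:
  assumes "0 \<le> s" "\<And>n i. (T ^^ n) s i \<le> C"
  obtains \<tau> u where "\<tau> \<in> subsolutions T" "\<And>n. (T ^^ n) s \<le> u n" "\<And>i. (\<lambda>n. u n i) \<longlonglongrightarrow> \<tau> i"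
proof -
  define u where "u n = (\<lambda>i. SUP k\<in>{n..}. (T ^^ k) s i)" for n
  define \<tau> where "\<tau> i = (INF n. u n i)" for i
  have bdd: "bdd_above (range (\<lambda>k. (T ^^ k) s i))" for i
    using assms(2) by (auto simp: bdd_above_def)
  have funpow_le_u: "(T ^^ n) s \<le> u n" for n
    unfolding u_def le_fun_def using tail_sup_ge[OF bdd order_refl] by blast
  have u_nonneg: "0 \<le> u n" for n
    using funpow_nonneg[OF assms(1), of n] funpow_le_u[of n] by (rule order_trans)
  have u_le: "u n i \<le> C" for n i
    unfolding u_def by (rule cSUP_least) (auto intro: assms(2))
  have u_tendsto: "(\<lambda>n. u n i) \<longlonglongrightarrow> \<tau> i" for i
    unfolding u_def \<tau>_def
    by (rule tail_sup_tendsto[OF bdd])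
      (use funpow_nonneg[OF assms(1)] in \<open>auto simp: bdd_below_def le_fun_def\<close>)
  have "\<tau> \<in> linf_pos"
    by (rule linf_pos_limit[OF u_nonneg u_le u_tendsto])
  moreover have "\<tau> i \<le> T \<tau> i" for i
  proof (rule LIMSEQ_le)
    show "(\<lambda>n. u (Suc n) i) \<longlonglongrightarrow> \<tau> i"
      using LIMSEQ_Suc[OF u_tendsto] .
    show "(\<lambda>n. T (u n) i) \<longlonglongrightarrow> T \<tau> i"
      by (rule componentwise_continuous[OF u_nonneg linf_pos_nonneg[OF \<open>\<tau> \<in> linf_pos\<close>] u_tendsto])
    show "\<exists>N. \<forall>n\<ge>N. u (Suc n) i \<le> T (u n) i"
      using tail_sup_funpow_le[OF assms] by (auto simp: u_def le_fun_def)
  qed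
  ultimately have "\<tau> \<in> subsolutions T"
    by (simp add: subsolutions_def le_fun_def)
  then show ?thesis
    using funpow_le_u u_tendsto by (rule that)
qed

lemma funpow_tendsto_greatest_fix:
  assumes "0 \<le> s" "greatest_fix T \<le> s" "\<And>n i. (T ^^ n) s i \<le> C"
  shows "weak_star_conv (\<lambda>n. (T ^^ n) s) (greatest_fix T)"
proof -
  obtain \<tau> u where \<tau>: "\<tau> \<in> subsolutions T" and funpow_le_u: "\<And>n. (T ^^ n) s \<le> u n"
    and u_tendsto: "\<And>i. (\<lambda>n. u n i) \<longlonglongrightarrow> \<tau> i"
    using limsup_funpow_subsolution[OF assms(1,3)] by metis
  have gfix_nonneg: "0 \<le> greatest_fix T"
    by (rule subsolution_le_greatest_fix[OF zero_in_subsolutions])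
  have gfix_le: "greatest_fix T \<le> (T ^^ n) s" for n
    using funpow_mono_arg[OF gfix_nonneg assms(2), of n]
    by (simp only: funpow_fixpoint[of T, OF greatest_fix_fixed])
  have "\<tau> = greatest_fix T"
  proof (rule order.antisym)
    show "\<tau> \<le> greatest_fix T"
      by (rule subsolution_le_greatest_fix[OF \<tau>])
    have gfix_le_u: "greatest_fix T \<le> u n" for n
      using gfix_le[of n] funpow_le_u[of n] by (rule order_trans)
    have "greatest_fix T i \<le> \<tau> i" for i
      by (rule LIMSEQ_le_const[OF u_tendsto]) (use gfix_le_u in \<open>simp add: le_fun_def\<close>)
    then show "greatest_fix T \<le> \<tau>"
      by (simp add: le_fun_def)
  qed
  have "(\<lambda>n. (T ^^ n) s i) \<longlonglongrightarrow> greatest_fix T i" for i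
  proof (rule tendsto_sandwich[OF _ _ tendsto_const])
    show "\<forall>\<^sub>F n in sequentially. greatest_fix T i \<le> (T ^^ n) s i"
      using gfix_le by (simp add: le_fun_def)
    show "\<forall>\<^sub>F n in sequentially. (T ^^ n) s i \<le> u n i"
      using funpow_le_u by (simp add: le_fun_def)
    show "(\<lambda>n. u n i) \<longlonglongrightarrow> greatest_fix T i"
      using u_tendsto \<open>\<tau> = greatest_fix T\<close> by simp
  qed
  then show ?thesis
    by (rule weak_star_convI[OF funpow_nonneg[OF assms(1)] assms(3)])
qed

end

lemma least_fix_mono:
  assumes "subsolution_bounded_operator S" "subsolution_bounded_operator T"
    and "\<And>s. 0 \<le> s \<Longrightarrow> S s \<le> T s"
  shows "least_fix S \<le> least_fix T"
proof -
  interpret S: subsolution_bounded_operator S by fact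
  interpret T: subsolution_bounded_operator T by fact
  have "(S ^^ n) 0 \<le> least_fix T" for n
    using T.funpow_mono_operator[OF S.monotone_operator_axioms assms(3) order_refl]
      T.funpow_zero_le_least_fix by (rule order_trans)
  then show ?thesis
    unfolding least_fix_def[of S] le_fun_def by (auto intro: cSUP_least)
qed

lemma greatest_fix_mono:
  assumes "subsolution_bounded_operator S" "subsolution_bounded_operator T"
    and "\<And>s. 0 \<le> s \<Longrightarrow> S s \<le> T s"
  shows "greatest_fix S \<le> greatest_fix T"
proof -
  interpret S: subsolution_bounded_operator S by fact
  interpret T: subsolution_bounded_operator T by fact
  have "s \<in> subsolutions T" if "s \<in> subsolutions S" for s
    using that assms(3)[OF linf_pos_nonneg] by (auto simp: subsolutions_def intro: order_trans)
  then have "s i \<le> greatest_fix T i" if "s \<in> subsolutions S" for s i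
    using that T.subsolution_le_greatest_fix by (auto simp: le_fun_def)
  then show ?thesis
    unfolding greatest_fix_def[of S] le_fun_def
    using S.zero_in_subsolutions by (auto intro: cSUP_least)
qed

section \<open>Gain operators\<close>

lemma Kinf_nonneg: "Kinf g \<Longrightarrow> 0 \<le> r \<Longrightarrow> 0 \<le> g r"
  unfolding Kinf_def by auto

lemma Kinf_mono: "Kinf g \<Longrightarrow> 0 \<le> r \<Longrightarrow> r \<le> r' \<Longrightarrow> g r \<le> g r'"
  unfolding Kinf_def by (auto intro: strict_mono_on_leD)

lemma Kinf_continuous_on: "Kinf g \<Longrightarrow> continuous_on {0..} g"
  unfolding Kinf_def by auto

lemma gain_operator_finite: "gain_operator Ii gam mu \<Longrightarrow> finite (Ii i)"
  unfolding gain_operator_def by simp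

lemma gain_operator_Kinf: "gain_operator Ii gam mu \<Longrightarrow> j \<in> Ii i \<Longrightarrow> Kinf (gam i j)"
  unfolding gain_operator_def by simp

lemma gain_operator_mu_nonneg: "gain_operator Ii gam mu \<Longrightarrow> s \<in> linf_pos \<Longrightarrow> 0 \<le> mu i s"
  unfolding gain_operator_def by simp

lemma gain_operator_mu_mono:
  "gain_operator Ii gam mu \<Longrightarrow> s \<in> linf_pos \<Longrightarrow> t \<in> linf_pos \<Longrightarrow> s \<le> t \<Longrightarrow> mu i s \<le> mu i t"
  unfolding gain_operator_def by simp

lemma gain_operator_mu_finitely_supported:
  assumes "gain_operator Ii gam mu"
  shows "\<forall>i J. finite J \<longrightarrow>
        (\<forall>s\<in>linf_pos. (\<forall>j. j \<notin> J \<longrightarrow> s j = 0) \<longrightarrow>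
           \<bar>mu i s\<bar> \<noteq> \<infinity> \<and>
           (\<forall>\<epsilon>>0. \<exists>\<delta>>0. \<forall>t\<in>linf_pos. (\<forall>j. j \<notin> J \<longrightarrow> t j = 0) \<longrightarrow>
               linf_norm (\<lambda>j. t j - s j) < \<delta> \<longrightarrow>
               \<bar>real_of_ereal (mu i t) - real_of_ereal (mu i s)\<bar> < \<epsilon>))"
  using assms unfolding gain_operator_def by (elim conjE) assumption

lemma gain_operator_mu_finite:
  assumes "gain_operator Ii gam mu" "finite J" "s \<in> linf_pos" "\<And>j. j \<notin> J \<Longrightarrow> s j = 0"
  shows "\<bar>mu i s\<bar> \<noteq> \<infinity>"
  using gain_operator_mu_finitely_supported[OF assms(1), rule_format, OF assms(2-4)] by (rule conjunct1)

lemma gain_operator_mu_continuous: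
  assumes "gain_operator Ii gam mu" "finite J" "s \<in> linf_pos" "\<And>j. j \<notin> J \<Longrightarrow> s j = 0"
    and "0 < \<epsilon>"
  shows "\<exists>\<delta>>0. \<forall>t\<in>linf_pos. (\<forall>j. j \<notin> J \<longrightarrow> t j = 0) \<longrightarrow>
          linf_norm (\<lambda>j. t j - s j) < \<delta> \<longrightarrow>
          \<bar>real_of_ereal (mu i t) - real_of_ereal (mu i s)\<bar> < \<epsilon>"
  using gain_operator_mu_finitely_supported[OF assms(1), rule_format, OF assms(2-4), THEN conjunct2] assms(5) by blast

lemma mu_tendsto_finite_support:
  fixes t :: "nat \<Rightarrow> 'i \<Rightarrow> real" and e :: "nat \<Rightarrow> real"
  assumes "gain_operator Ii gam mu" "finite J" "s \<in> linf_pos" "\<And>j. j \<notin> J \<Longrightarrow> s j = 0"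
    and "\<And>n. t n \<in> linf_pos" "\<And>n j. j \<notin> J \<Longrightarrow> t n j = 0"
    and "\<And>n. linf_norm (\<lambda>j. t n j - s j) \<le> e n" "e \<longlonglongrightarrow> 0"
  shows "(\<lambda>n. real_of_ereal (mu i (t n))) \<longlonglongrightarrow> real_of_ereal (mu i s)"
  unfolding tendsto_iff dist_real_def
proof (intro allI impI)
  fix \<epsilon> :: real
  assume "0 < \<epsilon>"
  then obtain \<delta> where "0 < \<delta>" and \<delta>: "\<forall>t\<in>linf_pos. (\<forall>j. j \<notin> J \<longrightarrow> t j = 0) \<longrightarrow>
      linf_norm (\<lambda>j. t j - s j) < \<delta> \<longrightarrow> \<bar>real_of_ereal (mu i t) - real_of_ereal (mu i s)\<bar> < \<epsilon>"
    using gain_operator_mu_continuous[OF assms(1-4)] by blast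
  have "\<forall>\<^sub>F n in sequentially. e n < \<delta>"
    using order_tendstoD(2)[OF assms(8) \<open>0 < \<delta>\<close>] .
  then show "\<forall>\<^sub>F n in sequentially. \<bar>real_of_ereal (mu i (t n)) - real_of_ereal (mu i s)\<bar> < \<epsilon>"
  proof (rule eventually_mono)
    fix n
    assume "e n < \<delta>"
    then have "linf_norm (\<lambda>j. t n j - s j) < \<delta>"
      using assms(7)[of n] by linarith
    moreover have "\<forall>j. j \<notin> J \<longrightarrow> t n j = 0"
      using assms(6) by blast
    ultimately show "\<bar>real_of_ereal (mu i (t n)) - real_of_ereal (mu i s)\<bar> < \<epsilon>"
      using \<delta> assms(5)[of n] by blast
  qed
qed

definition gain_args :: "('i \<Rightarrow> 'i set) \<Rightarrow> ('i \<Rightarrow> 'i \<Rightarrow> real \<Rightarrow> real) \<Rightarrow> ('i \<Rightarrow> real) \<Rightarrow> 'i \<Rightarrow> 'i \<Rightarrow> real"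
  where "gain_args Ii gam s i = (\<lambda>j. if j \<in> Ii i then gam i j (s j) else 0)"

lemma Gam_gain_args: "Gam Ii gam mu s i = real_of_ereal (mu i (gain_args Ii gam s i))"
  unfolding Gam_def gain_args_def ..

lemma gain_args_support: "j \<notin> Ii i \<Longrightarrow> gain_args Ii gam s i j = 0"
  unfolding gain_args_def by simp

lemma gain_args_in_linf_pos:
  assumes "gain_operator Ii gam mu" "0 \<le> s"
  shows "gain_args Ii gam s i \<in> linf_pos"
proof (rule linf_posI)
  have "0 \<le> gam i j (s j)" if "j \<in> Ii i" for j
    using assms(2) by (simp add: le_fun_def Kinf_nonneg gain_operator_Kinf[OF assms(1) that])
  then show "0 \<le> gain_args Ii gam s i"
    by (simp add: gain_args_def le_fun_def)
  then show "gain_args Ii gam s i j \<le> (\<Sum>k\<in>Ii i. gam i k (s k))" for j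
    using gain_operator_finite[OF assms(1)] \<open>\<And>j. j \<in> Ii i \<Longrightarrow> 0 \<le> gam i j (s j)\<close>
    by (auto simp: gain_args_def intro: member_le_sum sum_nonneg)
qed

lemma gain_args_mono:
  assumes "gain_operator Ii gam mu" "0 \<le> s" "s \<le> t"
  shows "gain_args Ii gam s i \<le> gain_args Ii gam t i"
  using assms gain_operator_Kinf[OF assms(1)]
  by (auto simp: gain_args_def le_fun_def intro: Kinf_mono)

lemma Gam_mono:
  assumes "gain_operator Ii gam mu" "0 \<le> s" "s \<le> t"
  shows "Gam Ii gam mu s \<le> Gam Ii gam mu t"
proof (rule le_funI)
  fix i
  have "0 \<le> t"
    using assms(2,3) by (rule order_trans)
  have "mu i (gain_args Ii gam s i) \<le> mu i (gain_args Ii gam t i)"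
    using assms by (intro gain_operator_mu_mono gain_args_in_linf_pos gain_args_mono \<open>0 \<le> t\<close>)
  moreover have "\<bar>mu i (gain_args Ii gam t i)\<bar> \<noteq> \<infinity>"
    by (rule gain_operator_mu_finite[OF assms(1) gain_operator_finite[OF assms(1)]
          gain_args_in_linf_pos[OF assms(1) \<open>0 \<le> t\<close>] gain_args_support])
  ultimately show "Gam Ii gam mu s i \<le> Gam Ii gam mu t i"
    unfolding Gam_gain_args using assms(1,2)
    by (intro real_of_ereal_positive_mono gain_operator_mu_nonneg gain_args_in_linf_pos) auto
qed

lemma Gam_tendsto:
  assumes go: "gain_operator Ii gam mu"
    and x: "\<And>n. 0 \<le> x n" and y: "0 \<le> y" and lim: "\<And>j. (\<lambda>n. x n j) \<longlonglongrightarrow> y j"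
  shows "(\<lambda>n. Gam Ii gam mu (x n) i) \<longlonglongrightarrow> Gam Ii gam mu y i"
proof -
  have gam_tendsto: "(\<lambda>n. gam i j (x n j)) \<longlonglongrightarrow> gam i j (y j)" if "j \<in> Ii i" for j
    using x y
    by (intro continuous_on_tendsto_compose[OF Kinf_continuous_on[OF gain_operator_Kinf[OF go that]] lim])
      (auto simp: le_fun_def)
  have error_tendsto: "(\<lambda>n. \<Sum>j\<in>Ii i. \<bar>gam i j (x n j) - gam i j (y j)\<bar>) \<longlonglongrightarrow> 0"
    by (intro tendsto_null_sum tendsto_rabs_zero LIM_zero gam_tendsto)
  have error_bound: "linf_norm (\<lambda>j. gain_args Ii gam (x n) i j - gain_args Ii gam y i j)
      \<le> (\<Sum>j\<in>Ii i. \<bar>gam i j (x n j) - gam i j (y j)\<bar>)" for n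
  proof (rule linf_norm_le)
    fix k
    show "\<bar>gain_args Ii gam (x n) i k - gain_args Ii gam y i k\<bar>
        \<le> (\<Sum>j\<in>Ii i. \<bar>gam i j (x n j) - gam i j (y j)\<bar>)"
      using gain_operator_finite[OF go]
      by (cases "k \<in> Ii i") (auto simp: gain_args_def intro: member_le_sum sum_nonneg)
  qed
  show ?thesis
    unfolding Gam_gain_args
    by (rule mu_tendsto_finite_support[OF go gain_operator_finite[OF go] gain_args_in_linf_pos[OF go y]
          gain_args_support gain_args_in_linf_pos[OF go x] gain_args_support error_bound error_tendsto])
qed


lemma Gam_b_apply: "Gam_b Ii gam mu b s i = max (b i) (Gam Ii gam mu s i)"
  unfolding Gam_b_def oplus_def ..

lemma Gam_b_mono_offset: "b \<le> b' \<Longrightarrow> Gam_b Ii gam mu b s \<le> Gam_b Ii gam mu b' s"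
  by (simp add: le_fun_def Gam_b_apply max.coboundedI1)

lemma monotone_operator_Gam_b:
  fixes b :: "'i \<Rightarrow> real"
  assumes "gain_operator Ii gam mu" "0 \<le> b"
  shows "monotone_operator (Gam_b Ii gam mu b)"
proof
  fix s t :: "'i \<Rightarrow> real"
  assume "0 \<le> s"
  then show "0 \<le> Gam_b Ii gam mu b s"
    using assms(2) by (simp add: le_fun_def Gam_b_apply max.coboundedI1)
  assume "s \<le> t"
  then show "Gam_b Ii gam mu b s \<le> Gam_b Ii gam mu b t"
    using Gam_mono[OF assms(1) \<open>0 \<le> s\<close>] by (simp add: le_fun_def Gam_b_apply max.coboundedI2)
qed

lemma subsolution_bounded_operator_Gam_b:
  fixes b :: "'i \<Rightarrow> real"
  assumes go: "gain_operator Ii gam mu" and mbi: "MBI_oplus Ii gam mu" and b: "b \<in> linf_pos"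
  shows "subsolution_bounded_operator (Gam_b Ii gam mu b)"
proof (intro subsolution_bounded_operator.intro subsolution_bounded_operator_axioms.intro)
  show "monotone_operator (Gam_b Ii gam mu b)"
    by (rule monotone_operator_Gam_b[OF go linf_pos_nonneg[OF b]])
  obtain \<phi> where \<phi>: "\<And>s. s \<in> linf_pos \<Longrightarrow> s \<le> oplus b (Gam Ii gam mu s) \<Longrightarrow>
      linf_norm s \<le> \<phi> (linf_norm b)"
    using mbi b unfolding MBI_oplus_def by blast
  have "s i \<le> \<phi> (linf_norm b)" if "s \<in> subsolutions (Gam_b Ii gam mu b)" for s i
  proof -
    have s: "s \<in> linf_pos" "s \<le> oplus b (Gam Ii gam mu s)"
      using that by (simp_all add: subsolutions_def Gam_b_def)
    have "s i \<le> linf_norm s"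
      by (rule le_linf_norm[OF s(1)])
    also have "\<dots> \<le> \<phi> (linf_norm b)"
      by (rule \<phi>[OF s])
    finally show ?thesis .
  qed
  then show "\<exists>K. \<forall>s\<in>subsolutions (Gam_b Ii gam mu b). \<forall>i. s i \<le> K"
    by blast
  fix x :: "nat \<Rightarrow> 'i \<Rightarrow> real" and y i
  assume "\<And>n. 0 \<le> x n" "0 \<le> y" "\<And>j. (\<lambda>n. x n j) \<longlonglongrightarrow> y j"
  then show "(\<lambda>n. Gam_b Ii gam mu b (x n) i) \<longlonglongrightarrow> Gam_b Ii gam mu b y i"
    unfolding Gam_b_apply by (intro tendsto_max tendsto_const Gam_tendsto[OF go])
qed

text \<open>Iterates starting above \<open>s\<^sup>*(b)\<close> are bounded because they are dominated by the iterates
  of \<open>\<Gamma>\<^sup>\<oplus>\<^sub>c\<close>, \<open>c = s \<oplus> b\<close>, for which the starting point is a subsolution.\<close>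

lemma Gam_b_funpow_bounded:
  assumes go: "gain_operator Ii gam mu" and mbi: "MBI_oplus Ii gam mu"
    and b: "b \<in> linf_pos" and s: "s \<in> linf_pos"
  shows "\<exists>C. \<forall>n i. (Gam_b Ii gam mu b ^^ n) s i \<le> C"
proof -
  define c where "c = oplus s b"
  obtain Ks Kb where Ks: "\<And>i. s i \<le> Ks" and Kb: "\<And>i. b i \<le> Kb"
    using linf_pos_bounded[OF s] linf_pos_bounded[OF b] by blast
  have "c i \<le> max Ks Kb" for i
    using max.mono[OF Ks Kb] by (simp add: c_def oplus_def)
  moreover have "0 \<le> c"
    using linf_pos_nonneg[OF s] by (simp add: c_def oplus_def le_fun_def max.coboundedI1)
  ultimately have "c \<in> linf_pos"
    by (intro linf_posI)
  interpret C: subsolution_bounded_operator "Gam_b Ii gam mu c"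
    by (rule subsolution_bounded_operator_Gam_b[OF go mbi \<open>c \<in> linf_pos\<close>])
  obtain K where K: "\<And>u i. u \<in> subsolutions (Gam_b Ii gam mu c) \<Longrightarrow> u i \<le> K"
    using C.subsolutions_bounded by blast
  have "s \<in> subsolutions (Gam_b Ii gam mu c)"
    using s by (simp add: subsolutions_def le_fun_def Gam_b_apply c_def oplus_def le_max_iff_disj)
  then have bounded: "(Gam_b Ii gam mu c ^^ n) s i \<le> K" for n i
    by (intro K C.funpow_in_subsolutions)
  have "b \<le> c"
    by (simp add: c_def oplus_def le_fun_def)
  then have dominated: "(Gam_b Ii gam mu b ^^ n) s \<le> (Gam_b Ii gam mu c ^^ n) s" for n
    by (intro C.funpow_mono_operator monotone_operator_Gam_b[OF go linf_pos_nonneg[OF b]]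
        Gam_b_mono_offset linf_pos_nonneg[OF s])
  have "(Gam_b Ii gam mu b ^^ n) s i \<le> K" for n i
    using le_funD[OF dominated[of n], of i] bounded[of n i] by linarith
  then show ?thesis
    by blast
qed

lemma Gam_b_least_greatest_fix:
  assumes "gain_operator Ii gam mu" "MBI_oplus Ii gam mu" and b: "b \<in> linf_pos"
  defines "T \<equiv> Gam_b Ii gam mu b"
  shows "least_fix T \<in> Fix_pos T \<and> greatest_fix T \<in> Fix_pos T
      \<and> (\<forall>s\<in>Fix_pos T. least_fix T \<le> s \<and> s \<le> greatest_fix T)
      \<and> (\<forall>s\<in>linf_pos. s \<le> least_fix T \<longrightarrow> weak_star_conv (\<lambda>n. (T ^^ n) s) (least_fix T))
      \<and> (\<forall>s\<in>linf_pos. greatest_fix T \<le> s \<longrightarrow> weak_star_conv (\<lambda>n. (T ^^ n) s) (greatest_fix T))"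
proof (intro conjI ballI impI)
  interpret subsolution_bounded_operator T
    unfolding T_def using assms(1,2) b by (rule subsolution_bounded_operator_Gam_b)
  show "least_fix T \<in> Fix_pos T"
    using least_fix_in_linf_pos least_fix_fixed by (simp add: Fix_pos_def)
  show "greatest_fix T \<in> Fix_pos T"
    using greatest_fix_in_subsolutions greatest_fix_fixed by (simp add: Fix_pos_def subsolutions_def)
  show "least_fix T \<le> s" if "s \<in> Fix_pos T" for s
    using that by (intro least_fix_le_supersolution linf_pos_nonneg) (simp_all add: Fix_pos_def)
  show "s \<le> greatest_fix T" if "s \<in> Fix_pos T" for s
    using that by (rule fixpoint_le_greatest_fix)
  show "weak_star_conv (\<lambda>n. (T ^^ n) s) (least_fix T)" if "s \<in> linf_pos" "s \<le> least_fix T" for s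
    using that by (intro funpow_tendsto_least_fix linf_pos_nonneg)
  show "weak_star_conv (\<lambda>n. (T ^^ n) s) (greatest_fix T)"
    if s: "s \<in> linf_pos" and above: "greatest_fix T \<le> s" for s
  proof -
    obtain C where "\<And>n i. (T ^^ n) s i \<le> C"
      using Gam_b_funpow_bounded[OF assms(1,2) b s] unfolding T_def by blast
    then show ?thesis
      by (rule funpow_tendsto_greatest_fix[OF linf_pos_nonneg[OF s] above])
  qed
qed

lemma Gam_b_least_greatest_fix_mono:
  assumes go: "gain_operator Ii gam mu" and mbi: "MBI_oplus Ii gam mu"
    and "b1 \<in> linf_pos" "b2 \<in> linf_pos" "b1 \<le> b2"
  shows "least_fix (Gam_b Ii gam mu b1) \<le> least_fix (Gam_b Ii gam mu b2)
    \<and> greatest_fix (Gam_b Ii gam mu b1) \<le> greatest_fix (Gam_b Ii gam mu b2)"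
proof -
  have "\<And>s. 0 \<le> s \<Longrightarrow> Gam_b Ii gam mu b1 s \<le> Gam_b Ii gam mu b2 s"
    by (rule Gam_b_mono_offset[OF assms(5)])
  with subsolution_bounded_operator_Gam_b[OF go mbi assms(3)]
    subsolution_bounded_operator_Gam_b[OF go mbi assms(4)] show ?thesis
    by (intro conjI least_fix_mono greatest_fix_mono)
qed

theorem proposition3p6:
  fixes Ii :: "'i::countable \<Rightarrow> 'i set"
    and gam :: "'i \<Rightarrow> 'i \<Rightarrow> real \<Rightarrow> real"
    and mu :: "'i \<Rightarrow> ('i \<Rightarrow> real) \<Rightarrow> ereal"
  assumes "gain_operator Ii gam mu"
    and "MBI_oplus Ii gam mu"
  shows "\<exists>slow supp :: ('i \<Rightarrow> real) \<Rightarrow> ('i \<Rightarrow> real).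
     (\<forall>b\<in>linf_pos.
        slow b \<in> Fix_pos (Gam_b Ii gam mu b) \<and> supp b \<in> Fix_pos (Gam_b Ii gam mu b)
      \<and> (\<forall>s\<in>Fix_pos (Gam_b Ii gam mu b). slow b \<le> s \<and> s \<le> supp b)
      \<and> (\<forall>s\<in>linf_pos. s \<le> slow b \<longrightarrow>
            weak_star_conv (\<lambda>n. (Gam_b Ii gam mu b ^^ n) s) (slow b))
      \<and> (\<forall>s\<in>linf_pos. supp b \<le> s \<longrightarrow>
            weak_star_conv (\<lambda>n. (Gam_b Ii gam mu b ^^ n) s) (supp b)))
   \<and> (\<forall>b1\<in>linf_pos. \<forall>b2\<in>linf_pos. b1 \<le> b2 \<longrightarrow>
        slow b1 \<le> slow b2 \<and> supp b1 \<le> supp b2)"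
proof -
  let ?T = "Gam_b Ii gam mu"
  show ?thesis
    by (intro exI[of _ "\<lambda>b. least_fix (?T b)"] exI[of _ "\<lambda>b. greatest_fix (?T b)"]
        conjI[OF ballI[OF Gam_b_least_greatest_fix[OF assms]]] ballI impI
        Gam_b_least_greatest_fix_mono[OF assms])
qed

end
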